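(* Let $a,b,c\geq 1$ be integers, put $v=a+b+c+1$ and $L=\{1^a,2^b,4^c\}$, and suppose $4\leq\lfloor v/2\rfloor$. Then there exists a Hamiltonian path $H$ of $K_v$ with $\ell(H)=L$ if and only if for every divisor $d$ of $v$, the number of elements of $L$ (with multiplicity) that are multiples of $d$ does not exceed $v-d$.
   Context: $K_v$ is the complete graph on $\{0,1,\dots,v-1\}$. The length of an edge $[x,y]$ is $\ell(x,y)=\min(|x-y|,\,v-|x-y|)$, and for a subgraph $\Gamma$, $\ell(\Gamma)$ is the multiset of lengths of its edges. $\{1^a,2^b,4^c\}$ is the multiset with $a$ copies of $1$, $b$ copies of $2$, $c$ copies of $4$. (The paper phrases this as "$\mathrm{BHR}(\{1^a,2^b,4^c\})$ holds".) *)

theory Defs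
  imports Main "HOL-Library.Multiset"
begin

definition edge_len :: "nat \<Rightarrow> nat \<Rightarrow> nat \<Rightarrow> nat" where
  "edge_len v x y = min (if x \<le> y then y - x else x - y) (v - (if x \<le> y then y - x else x - y))"

definition ham_path :: "nat \<Rightarrow> nat list \<Rightarrow> bool" where
  "ham_path v p \<longleftrightarrow> distinct p \<and> set p = {0..<v}"

definition path_lengths :: "nat \<Rightarrow> nat list \<Rightarrow> nat multiset" where
  "path_lengths v p = mset (map (\<lambda>(x, y). edge_len v x y) (zip p (tl p)))"

definition L124 :: "nat \<Rightarrow> nat \<Rightarrow> nat \<Rightarrow> nat multiset" where
  "L124 a b c = replicate_mset a 1 + replicate_mset b 2 + replicate_mset c 4"

end

theory Submission
  imports Defs
begin

text \<open>Necessity is the general divisor condition. If \<open>d\<close> divides \<open>v\<close>, an edge whose length is a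
  multiple of \<open>d\<close> joins two vertices in the same residue class mod \<open>d\<close>; a Hamiltonian path meets
  all \<open>d\<close> classes, so at least \<open>d - 1\<close> of its \<open>v - 1\<close> edges have length not divisible by \<open>d\<close>.
  For \<open>{1^a, 2^b, 4^c}\<close> the only nontrivial instance is \<open>d = 4\<close>: if \<open>4\<close> divides \<open>v\<close> then
  \<open>a + b \<ge> 3\<close>.

  Sufficiency is by construction. Running through the four residue classes mod 4 one after
  another, each traversed as a progression of step 4 forwards or backwards, gives a Hamiltonian
  path all of whose edges have length 4 except the three junctions between classes. A suitable
  order and orientation of the classes makes the junctions \<open>{1, 2, 2}\<close> or \<open>{1, 1, 2}\<close> for the
  ordinary distance, and \<open>{1, 2, 4}\<close> for the cyclic one when \<open>4\<close> does not divide \<open>v\<close>. A further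
  edge of length 1 is obtained by shifting a path that starts at 0 up by one and prepending 0;
  doing the same to the reversal of a path from 0 to 1 adds an edge of length 2 instead. Since all lengths are at most \<open>4 \<le> v/2\<close>, ordinary and cyclic lengths agree.\<close>

section \<open>Ordinary and cyclic edge lengths\<close>

definition absdiff :: "nat \<Rightarrow> nat \<Rightarrow> nat" where
  "absdiff x y = (if x \<le> y then y - x else x - y)"

lemma absdiff_commute: "absdiff x y = absdiff y x"
  by (simp add: absdiff_def)

lemma absdiff_add_right [simp]: "absdiff x (x + k) = k"
  by (simp add: absdiff_def)

lemma absdiff_Suc_Suc [simp]: "absdiff (Suc x) (Suc y) = absdiff x y"
  by (simp add: absdiff_def)

lemma edge_len_absdiff: "edge_len v x y = min (absdiff x y) (v - absdiff x y)"
  by (simp add: edge_len_def absdiff_def)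

lemma edge_len_add_right: "2 * k \<le> v \<Longrightarrow> edge_len v x (x + k) = k"
  by (simp add: edge_len_absdiff)

lemma edge_len_commute: "edge_len v x y = edge_len v y x"
  by (simp add: edge_len_absdiff absdiff_commute)

lemma edge_len_eq_absdiff: "2 * absdiff x y \<le> v \<Longrightarrow> edge_len v x y = absdiff x y"
  by (simp add: edge_len_absdiff)

lemma filter_mset_replicate_mset:
  "filter_mset P (replicate_mset n x) = (if P x then replicate_mset n x else {#})"
  by (induction n) auto

definition step_lengths :: "('a \<Rightarrow> 'a \<Rightarrow> nat) \<Rightarrow> 'a list \<Rightarrow> nat multiset" where
  "step_lengths f P = mset (map (\<lambda>(x, y). f x y) (zip P (tl P)))"

lemma step_lengths_Nil [simp]: "step_lengths f [] = {#}"
  and step_lengths_singleton [simp]: "step_lengths f [x] = {#}"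
  and step_lengths_Cons_Cons [simp]: "step_lengths f (x # y # P) = add_mset (f x y) (step_lengths f (y # P))"
  by (simp_all add: step_lengths_def)

lemma step_lengths_Cons: "P \<noteq> [] \<Longrightarrow> step_lengths f (x # P) = add_mset (f x (hd P)) (step_lengths f P)"
  by (cases P) simp_all

lemma step_lengths_append:
  "P \<noteq> [] \<Longrightarrow> Q \<noteq> [] \<Longrightarrow>
   step_lengths f (P @ Q) = step_lengths f P + step_lengths f Q + {#f (last P) (hd Q)#}"
  by (induction P rule: induct_list012) (simp_all add: step_lengths_Cons)

lemma step_lengths_rev:
  assumes "\<And>x y. f x y = f y x"
  shows "step_lengths f (rev P) = step_lengths f P"
proof (induction P rule: induct_list012)
  case (3 x y P)
  have "step_lengths f (rev (x # y # P)) = step_lengths f (rev (y # P) @ [x])" by simp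
  also have "\<dots> = add_mset (f x y) (step_lengths f (y # P))"
    using "3.IH"(2) assms by (simp add: step_lengths_append last_rev del: rev.simps)
  finally show ?case by simp
qed simp_all

lemma step_lengths_map_Suc: "step_lengths absdiff (map Suc P) = step_lengths absdiff P"
  by (induction P rule: induct_list012) simp_all

lemma size_filter_step_lengths:
  "size (filter_mset Q (step_lengths f P)) = length (filter (\<lambda>(x, y). Q (f x y)) (zip P (tl P)))"
  by (simp add: step_lengths_def filter_mset_image_mset split_def flip: mset_filter)

lemma path_lengths_eq_step_lengths: "path_lengths v P = step_lengths (edge_len v) P"
  by (simp add: path_lengths_def step_lengths_def)

lemma path_lengths_eq_step_lengths_absdiff:
  assumes "\<And>l. l \<in># step_lengths absdiff P \<Longrightarrow> 2 * l \<le> v"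
  shows "path_lengths v P = step_lengths absdiff P"
  unfolding path_lengths_def step_lengths_def
proof (intro arg_cong[where f = mset] map_cong refl, clarify)
  fix x y assume "(x, y) \<in> set (zip P (tl P))"
  then have "absdiff x y \<in># step_lengths absdiff P" by (force simp: step_lengths_def)
  then show "edge_len v x y = absdiff x y" using assms edge_len_eq_absdiff by blast
qed

section \<open>The divisor condition\<close>

lemma length_filter_mono_on:
  "(\<And>x. x \<in> set xs \<Longrightarrow> P x \<Longrightarrow> Q x) \<Longrightarrow> length (filter P xs) \<le> length (filter Q xs)"
  by (induction xs) auto

lemma card_image_le_Suc_changes:
  "card (g ` set P) \<le> Suc (length (filter (\<lambda>(x, y). g x \<noteq> g y) (zip P (tl P))))"
proof (induction P rule: induct_list012)
  case (3 x y P)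
  have "card (g ` set (x # y # P)) \<le> Suc (card (g ` set (y # P)))"
    by (simp add: card_insert_le_m1 card_insert_if)
  moreover have "g x = g y \<Longrightarrow> g ` set (x # y # P) = g ` set (y # P)" by auto
  ultimately show ?case using "3.IH"(2) by auto
qed simp_all

lemma dvd_edge_len_imp_mod_eq:
  assumes "d dvd v" "x < v" "y < v" "d dvd edge_len v x y"
  shows "x mod d = y mod d"
proof -
  have "absdiff x y \<le> v" using assms(2,3) by (auto simp: absdiff_def)
  moreover have "d dvd absdiff x y \<or> d dvd v - absdiff x y"
    using assms(4) by (auto simp: edge_len_absdiff min_def split: if_splits)
  ultimately have "d dvd absdiff x y" using assms(1) by (metis diff_diff_cancel dvd_diff_nat)
  then show ?thesis
    by (cases "x \<le> y")
      (auto simp: absdiff_def intro: mod_eq_dvd_iff_nat[THEN iffD2, symmetric] mod_eq_dvd_iff_nat[THEN iffD2])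
qed

theorem size_filter_dvd_path_lengths_le:
  assumes "ham_path v H" "d dvd v"
  shows "size (filter_mset (\<lambda>l. d dvd l) (path_lengths v H)) \<le> v - d"
proof (cases "v = 0")
  case False
  let ?E = "zip H (tl H)"
  have "d > 0" "d \<le> v" using assms(2) False by (auto simp: dvd_imp_le)
  then have "(\<lambda>x. x mod d) ` set H = {0..<d}"
  proof (intro equalityI subsetI)
    fix r assume "r \<in> {0..<d}"
    then have "r \<in> set H" "r mod d = r" using assms(1) \<open>d \<le> v\<close> by (auto simp: ham_path_def)
    then show "r \<in> (\<lambda>x. x mod d) ` set H" by force
  qed auto
  then have "d \<le> Suc (length (filter (\<lambda>(x, y). x mod d \<noteq> y mod d) ?E))"
    using card_image_le_Suc_changes[of "\<lambda>x. x mod d" H] by simp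
  moreover have "length (filter (\<lambda>(x, y). d dvd edge_len v x y) ?E)
      \<le> length (filter (\<lambda>(x, y). x mod d = y mod d) ?E)"
  proof (rule length_filter_mono_on, clarify)
    fix x y assume "(x, y) \<in> set ?E" "d dvd edge_len v x y"
    moreover from this(1) have "x < v" "y < v"
      using assms(1) by (cases H; auto simp: ham_path_def dest: set_zip_leftD set_zip_rightD)+
    ultimately show "x mod d = y mod d" using dvd_edge_len_imp_mod_eq[OF assms(2)] by blast
  qed
  moreover have "length ?E = v - 1"
    using assms(1) distinct_card[of H] by (simp add: ham_path_def)
  ultimately show ?thesis
    using sum_length_filter_compl[of "\<lambda>(x, y). x mod d = y mod d" ?E]
    by (simp add: size_filter_step_lengths path_lengths_eq_step_lengths split_def)
qed (use assms(1) in \<open>simp add: ham_path_def path_lengths_def\<close>)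

section \<open>Paths through the residue classes mod 4\<close>

lemma step_lengths_arith_prog:
  assumes "\<And>x. f x (x + m) = m"
  shows "step_lengths f (map (\<lambda>i. s + m * i) [0..<k]) = replicate_mset (k - 1) m"
proof (induction k)
  case (Suc k)
  show ?case
  proof (cases k)
    case (Suc j)
    let ?g = "\<lambda>i. s + m * i"
    have "step_lengths f (map ?g [0..<Suc k]) = step_lengths f (map ?g [0..<k] @ [?g k])" by simp
    also have "\<dots> = step_lengths f (map ?g [0..<k]) + {#f (?g j) (?g j + m)#}"
      using Suc by (simp add: step_lengths_append last_map algebra_simps del: upt_Suc)
    finally show ?thesis using Suc.IH Suc assms by simp
  qed simp
qed simp

definition residue_count :: "nat \<Rightarrow> nat \<Rightarrow> nat" where
  "residue_count n r = n div 4 + (if r < n mod 4 then 1 else 0)"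

definition residue_class :: "nat \<Rightarrow> nat \<Rightarrow> nat list" where
  "residue_class n r = map (\<lambda>i. r + 4 * i) [0..<residue_count n r]"

lemma set_residue_class: "r < 4 \<Longrightarrow> set (residue_class n r) = {x. x < n \<and> x mod 4 = r}"
proof (intro equalityI subsetI)
  fix x assume r: "r < 4" and "x \<in> {x. x < n \<and> x mod 4 = r}"
  then have x: "x < n" "x = r + 4 * (x div 4)" using div_mult_mod_eq[of x 4] by auto
  have "x div 4 < residue_count n r"
  proof (cases "x div 4 < n div 4")
    case False
    then have "x div 4 = n div 4" using x(1) div_le_mono[of x n 4] by simp
    then have "r < n mod 4" using x div_mult_mod_eq[of n 4] by linarith
    then show ?thesis using False \<open>x div 4 = n div 4\<close> by (simp add: residue_count_def)
  qed (simp add: residue_count_def)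
  then show "x \<in> set (residue_class n r)" using x(2) by (force simp: residue_class_def)
next
  fix x assume "r < 4" "x \<in> set (residue_class n r)"
  then obtain i where "i < residue_count n r" "x = r + 4 * i" by (auto simp: residue_class_def)
  moreover have "r + 4 * i < n"
    using \<open>r < 4\<close> \<open>i < _\<close> div_mult_mod_eq[of n 4] unfolding residue_count_def by (split if_split_asm) linarith+
  ultimately show "x \<in> {x. x < n \<and> x mod 4 = r}" using \<open>r < 4\<close> by simp
qed

lemma distinct_residue_class: "distinct (residue_class n r)"
  by (auto simp: residue_class_def distinct_map inj_on_def)

lemma residue_class_eq_Nil_iff [simp]: "residue_class n r = [] \<longleftrightarrow> residue_count n r = 0"
  by (simp add: residue_class_def)

lemma residue_count_pos: "r < n \<Longrightarrow> 0 < residue_count n r"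
  unfolding residue_count_def using div_mult_mod_eq[of n 4] by (split if_split) linarith

lemma step_lengths_residue_class:
  "(\<And>x. f x (x + 4) = 4) \<Longrightarrow> step_lengths f (residue_class n r) = replicate_mset (residue_count n r - 1) 4"
  unfolding residue_class_def by (rule step_lengths_arith_prog)

lemma div_mod_4_cases:
  fixes n :: nat
  assumes "4 \<le> n"
  obtains k where "n div 4 = Suc k" "n mod 4 = 0" "n = 4 * Suc k"
    | k where "n div 4 = Suc k" "n mod 4 = 1" "n = 4 * Suc k + 1"
    | k where "n div 4 = Suc k" "n mod 4 = 2" "n = 4 * Suc k + 2"
    | k where "n div 4 = Suc k" "n mod 4 = 3" "n = 4 * Suc k + 3"
proof -
  obtain k where k: "n div 4 = Suc k" using assms not0_implies_Suc[of "n div 4"] by fastforce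
  consider "n mod 4 = 0" | "n mod 4 = 1" | "n mod 4 = 2" | "n mod 4 = 3" by linarith
  then show thesis using k div_mult_mod_eq[of n 4] by cases (auto intro: that)
qed

lemma sum_residue_count: "4 \<le> n \<Longrightarrow> (\<Sum>r\<in>{0, 1, 2, 3}. residue_count n r - 1) = n - 4"
  by (erule div_mod_4_cases) (simp_all add: residue_count_def)

definition oriented :: "bool \<Rightarrow> 'a list \<Rightarrow> 'a list" where
  "oriented b xs = (if b then rev xs else xs)"

lemma set_oriented [simp]: "set (oriented b xs) = set xs"
  and distinct_oriented [simp]: "distinct (oriented b xs) = distinct xs"
  and oriented_eq_Nil_iff [simp]: "oriented b xs = [] \<longleftrightarrow> xs = []"
  by (simp_all add: oriented_def)

lemma hd_oriented: "xs \<noteq> [] \<Longrightarrow> hd (oriented b xs) = (if b then last xs else hd xs)"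
  and last_oriented: "xs \<noteq> [] \<Longrightarrow> last (oriented b xs) = (if b then hd xs else last xs)"
  by (simp_all add: oriented_def hd_rev last_rev)

lemma step_lengths_oriented:
  "(\<And>x y. f x y = f y x) \<Longrightarrow> step_lengths f (oriented b xs) = step_lengths f xs"
  by (simp add: oriented_def step_lengths_rev)

lemma hd_oriented_residue_class:
  "0 < residue_count n r \<Longrightarrow> hd (oriented b (residue_class n r)) = (if b then r + 4 * (residue_count n r - 1) else r)"
  and last_oriented_residue_class:
  "0 < residue_count n r \<Longrightarrow> last (oriented b (residue_class n r)) = (if b then r else r + 4 * (residue_count n r - 1))"
  by (simp_all add: hd_oriented last_oriented residue_class_def hd_map last_map)

lemma snake_path:
  fixes f :: "nat \<Rightarrow> nat \<Rightarrow> nat"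
  assumes n: "4 \<le> n" and rs: "{r1, r2, r3, r4} = {0, 1, 2, 3}"
    and f4: "\<And>x. f x (x + 4) = 4" and f_commute: "\<And>x y. f x y = f y x"
  defines "C \<equiv> \<lambda>b r. oriented b (residue_class n r)"
  shows "ham_path n (C b1 r1 @ C b2 r2 @ C b3 r3 @ C b4 r4)"
    and "step_lengths f (C b1 r1 @ C b2 r2 @ C b3 r3 @ C b4 r4) = replicate_mset (n - 4) 4 +
      {#f (last (C b1 r1)) (hd (C b2 r2)), f (last (C b2 r2)) (hd (C b3 r3)), f (last (C b3 r3)) (hd (C b4 r4))#}"
proof -
  have r_distinct: "distinct [r1, r2, r3, r4]"
    by (rule card_distinct) (simp only: list.set rs, simp)
  have r_less: "r < 4" if "r \<in> {r1, r2, r3, r4}" for r using that rs by auto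
  have C_ne: "C b r \<noteq> []" if "r < 4" for b r using that n residue_count_pos[of r n] by (simp add: C_def)
  have set_C: "set (C b r) = {x. x < n \<and> x mod 4 = r}" if "r < 4" for b r
    using that by (simp add: C_def set_residue_class)
  have "set (C b1 r1 @ C b2 r2 @ C b3 r3 @ C b4 r4) = (\<Union>r\<in>{r1, r2, r3, r4}. {x. x < n \<and> x mod 4 = r})"
    using r_less by (simp add: set_C)
  also have "\<dots> = {0..<n}" unfolding rs by auto
  moreover have "distinct (C b r)" for b r by (simp add: C_def distinct_residue_class)
  ultimately show "ham_path n (C b1 r1 @ C b2 r2 @ C b3 r3 @ C b4 r4)"
    using r_distinct r_less by (auto simp: ham_path_def set_C)
  have "step_lengths f (C b r) = replicate_mset (residue_count n r - 1) 4" for b r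
    using step_lengths_residue_class[of f, OF f4] by (simp add: C_def step_lengths_oriented f_commute)
  moreover have "(\<Sum>r\<in>{r1, r2, r3, r4}. residue_count n r - 1) = n - 4"
    using sum_residue_count[OF n] by (simp add: rs)
  then have "(residue_count n r1 - 1) + (residue_count n r2 - 1) + (residue_count n r3 - 1)
      + (residue_count n r4 - 1) = n - 4"
    using r_distinct by (simp add: add.assoc)
  ultimately show "step_lengths f (C b1 r1 @ C b2 r2 @ C b3 r3 @ C b4 r4) = replicate_mset (n - 4) 4 +
      {#f (last (C b1 r1)) (hd (C b2 r2)), f (last (C b2 r2)) (hd (C b3 r3)), f (last (C b3 r3)) (hd (C b4 r4))#}"
    using r_distinct r_less C_ne
    by (simp add: step_lengths_append multiset_eq_iff)
qed

lemmas oriented_residue_class_ends = hd_oriented_residue_class last_oriented_residue_class residue_count_def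

lemma linear_path_1_2:
  assumes n: "4 \<le> n"
  obtains P where "ham_path n P" "hd P = 0" "last P = 1" "step_lengths absdiff P = L124 1 2 (n - 4)"
proof
  let ?C = "\<lambda>b r. oriented b (residue_class n r)"
  let ?P = "?C False 0 @ ?C True 2 @ ?C False 3 @ ?C True 1"
  have rs: "{0, 2, 3, 1} = {0, 1, 2, 3::nat}" by auto
  note snake = snake_path[of n 0 2 3 1 absdiff False True False True,
      OF n rs absdiff_add_right absdiff_commute]
  show "ham_path n ?P" by (rule snake(1))
  have junctions: "{#absdiff (last (?C False 0)) (hd (?C True 2)), absdiff (last (?C True 2)) (hd (?C False 3)),
      absdiff (last (?C False 3)) (hd (?C True 1))#} = {#1, 2, 2#}"
    using n by (cases rule: div_mod_4_cases) (simp_all add: oriented_residue_class_ends absdiff_def)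
  show "step_lengths absdiff ?P = L124 1 2 (n - 4)"
    unfolding snake(2) junctions by (simp add: L124_def numeral_2_eq_2 add_mset_commute)
  show "hd ?P = 0" "last ?P = 1"
    using n residue_count_pos[of 0 n] residue_count_pos[of 1 n] by (simp_all add: oriented_residue_class_ends)
qed

lemma linear_path_2_1:
  assumes n: "4 \<le> n"
  obtains P where "ham_path n P" "hd P = 0" "step_lengths absdiff P = L124 2 1 (n - 4)"
proof
  let ?C = "\<lambda>b r. oriented b (residue_class n r)"
  define x :: nat where "x = (if even n then 1 else 3)"
  let ?P = "?C False 0 @ ?C True x @ ?C False (4 - x) @ ?C True 2"
  have rs: "{0, x, 4 - x, 2} = {0, 1, 2, 3}" by (auto simp: x_def)
  note snake = snake_path[of n 0 x "4 - x" 2 absdiff False True False True,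
      OF n rs absdiff_add_right absdiff_commute]
  show "ham_path n ?P" by (rule snake(1))
  have junctions: "{#absdiff (last (?C False 0)) (hd (?C True x)), absdiff (last (?C True x)) (hd (?C False (4 - x))),
      absdiff (last (?C False (4 - x))) (hd (?C True 2))#} = {#1, 1, 2#}"
    using n by (cases rule: div_mod_4_cases) (simp_all add: x_def oriented_residue_class_ends absdiff_def)
  show "step_lengths absdiff ?P = L124 2 1 (n - 4)"
    unfolding snake(2) junctions by (simp add: L124_def numeral_2_eq_2 add_mset_commute)
  show "hd ?P = 0"
    using n residue_count_pos[of 0 n] by (simp add: oriented_residue_class_ends)
qed

lemma cyclic_path_1_1:
  assumes v: "8 \<le> v" and v_mod: "\<not> 4 dvd v"
  obtains H where "ham_path v H" "path_lengths v H = L124 1 1 (v - 3)"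
proof
  let ?C = "\<lambda>b r. oriented b (residue_class v r)"
  \<comment> \<open>classes in the order 0, 3, 1, 2 / 0, 2, 3, 1 / 0, 1, 3, 2 for \<open>v mod 4 = 1 / 2 / 3\<close>\<close>
  define x y :: nat where "x = 4 - v mod 4" and "y = (if v mod 4 = 1 then 1 else 3)"
  let ?H = "?C False 0 @ ?C False x @ ?C True y @ ?C False (6 - x - y)"
  have "v mod 4 = 1 \<or> v mod 4 = 2 \<or> v mod 4 = 3" using v_mod by (simp add: dvd_eq_mod_eq_0) linarith
  then have rs: "{0, x, y, 6 - x - y} = {0, 1, 2, 3}" by (auto simp: x_def y_def)
  have v4: "4 \<le> v" and f4: "\<And>x. edge_len v x (x + 4) = 4" using v by (simp_all add: edge_len_add_right)
  note snake = snake_path[of v 0 x y "6 - x - y" "edge_len v" False False True False,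
      OF v4 rs f4 edge_len_commute]
  show "ham_path v ?H" by (rule snake(1))
  have junctions: "{#edge_len v (last (?C False 0)) (hd (?C False x)), edge_len v (last (?C False x)) (hd (?C True y)),
      edge_len v (last (?C True y)) (hd (?C False (6 - x - y)))#} = {#1, 2, 4#}"
    using v4 by (cases rule: div_mod_4_cases) (use v v_mod in \<open>simp_all add: x_def y_def
          oriented_residue_class_ends edge_len_absdiff absdiff_def add_mset_commute\<close>)
  have "v - 3 = Suc (v - 4)" using v by simp
  then show "path_lengths v ?H = L124 1 1 (v - 3)"
    unfolding path_lengths_eq_step_lengths snake(2) junctions by (simp add: L124_def add_mset_commute)
qed

section \<open>Adding edges of length 1 and 2\<close>

lemma ham_path_Cons_0_map_Suc: "ham_path n P \<Longrightarrow> ham_path (Suc n) (0 # map Suc P)"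
  by (auto simp: ham_path_def distinct_map image_iff less_Suc_eq_0_disj)

lemma step_lengths_Cons_0_map_Suc:
  "P \<noteq> [] \<Longrightarrow> step_lengths absdiff (0 # map Suc P) = add_mset (Suc (hd P)) (step_lengths absdiff P)"
  by (simp add: step_lengths_Cons hd_map step_lengths_map_Suc absdiff_def)

lemma ham_path_ne: "ham_path n P \<Longrightarrow> 0 < n \<Longrightarrow> P \<noteq> []"
  by (auto simp: ham_path_def)

lemma linear_path_add_ones:
  assumes "ham_path n P" "0 < n" "hd P = 0"
  obtains Q where "ham_path (n + i) Q" "hd Q = 0"
    "step_lengths absdiff Q = step_lengths absdiff P + replicate_mset i 1"
proof -
  have "\<exists>Q. ham_path (n + i) Q \<and> hd Q = 0 \<and> step_lengths absdiff Q = step_lengths absdiff P + replicate_mset i 1"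
  proof (induction i)
    case (Suc i)
    then obtain Q where Q: "ham_path (n + i) Q" "hd Q = 0"
      "step_lengths absdiff Q = step_lengths absdiff P + replicate_mset i 1" by blast
    then have "Q \<noteq> []" using assms(2) ham_path_ne by simp
    then show ?case using Q ham_path_Cons_0_map_Suc[OF Q(1)]
      by (intro exI[of _ "0 # map Suc Q"]) (simp add: step_lengths_Cons_0_map_Suc)
  qed (use assms in auto)
  then show thesis using that by blast
qed

lemma linear_path_add_twos:
  assumes "ham_path n P" "0 < n" "hd P = 0" "last P = 1"
  obtains Q where "ham_path (n + j) Q" "hd Q = 0" "last Q = 1"
    "step_lengths absdiff Q = step_lengths absdiff P + replicate_mset j 2"
proof -
  have "\<exists>Q. ham_path (n + j) Q \<and> hd Q = 0 \<and> last Q = 1 \<and>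
      step_lengths absdiff Q = step_lengths absdiff P + replicate_mset j 2"
  proof (induction j)
    case (Suc j)
    then obtain Q where Q: "ham_path (n + j) Q" "hd Q = 0" "last Q = 1"
      "step_lengths absdiff Q = step_lengths absdiff P + replicate_mset j 2" by blast
    then have "Q \<noteq> []" using assms(2) ham_path_ne by simp
    moreover have "ham_path (n + j) (rev Q)" using Q(1) by (simp add: ham_path_def)
    ultimately show ?case using Q ham_path_Cons_0_map_Suc[of "n + j" "rev Q"]
      by (intro exI[of _ "0 # map Suc (rev Q)"])
        (simp add: step_lengths_Cons_0_map_Suc step_lengths_rev absdiff_commute hd_rev last_map last_rev)
  qed (use assms in auto)
  then show thesis using that by blast
qed

lemma linear_path_L124:
  assumes "1 \<le> a" "1 \<le> b" "3 \<le> a + b"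
  obtains P where "ham_path (a + b + c + 1) P" "step_lengths absdiff P = L124 a b c"
proof (cases "2 \<le> b")
  case True
  obtain P where P: "ham_path (c + 4) P" "hd P = 0" "last P = 1" "step_lengths absdiff P = L124 1 2 c"
    using linear_path_1_2[of "c + 4"] by auto
  obtain Q where Q: "ham_path (c + 4 + (b - 2)) Q" "hd Q = 0"
      "step_lengths absdiff Q = L124 1 2 c + replicate_mset (b - 2) 2"
    using linear_path_add_twos[OF P(1) _ P(2,3), of "b - 2"] P(4) by auto
  obtain R where "ham_path (c + 4 + (b - 2) + (a - 1)) R"
      "step_lengths absdiff R = L124 1 2 c + replicate_mset (b - 2) 2 + replicate_mset (a - 1) 1"
    using linear_path_add_ones[OF Q(1) _ Q(2), of "a - 1"] Q(3) by auto
  moreover have "c + 4 + (b - 2) + (a - 1) = a + b + c + 1" using assms True by simp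
  moreover have "L124 1 2 c + replicate_mset (b - 2) 2 + replicate_mset (a - 1) 1 = L124 a b c"
    using assms True by (auto simp: L124_def multiset_eq_iff)
  ultimately show thesis using that by metis
next
  case False
  obtain P where P: "ham_path (c + 4) P" "hd P = 0" "step_lengths absdiff P = L124 2 1 c"
    using linear_path_2_1[of "c + 4"] by auto
  obtain R where "ham_path (c + 4 + (a - 2)) R"
      "step_lengths absdiff R = L124 2 1 c + replicate_mset (a - 2) 1"
    using linear_path_add_ones[OF P(1) _ P(2), of "a - 2"] P(3) by auto
  moreover have "c + 4 + (a - 2) = a + b + c + 1" using assms False by simp
  moreover have "L124 2 1 c + replicate_mset (a - 2) 1 = L124 a b c"
    using assms False by (simp add: L124_def multiset_eq_iff)
  ultimately show thesis using that by metis
qed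

lemma ham_path_L124:
  assumes "1 \<le> a" "1 \<le> b" "v = a + b + c + 1" "8 \<le> v" "4 dvd v \<Longrightarrow> 3 \<le> a + b"
  obtains H where "ham_path v H" "path_lengths v H = L124 a b c"
proof (cases "3 \<le> a + b")
  case True
  obtain P where P: "ham_path v P" "step_lengths absdiff P = L124 a b c"
    using linear_path_L124[OF assms(1,2) True, of c] assms(3) by metis
  moreover have "path_lengths v P = step_lengths absdiff P"
    by (rule path_lengths_eq_step_lengths_absdiff) (use P(2) assms(4) in \<open>auto simp: L124_def split: if_splits\<close>)
  ultimately show thesis using that by auto
next
  case False
  then have "a = 1" "b = 1" "\<not> 4 dvd v" using assms(1,2,5) by auto
  moreover have "v - 3 = c" using \<open>a = 1\<close> \<open>b = 1\<close> assms(3) by simp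
  ultimately show thesis using cyclic_path_1_1[OF assms(4)] that by metis
qed

theorem proposition5p1:
  fixes a b c v :: nat
  assumes "a \<ge> 1" and "b \<ge> 1" and "c \<ge> 1"
    and "v = a + b + c + 1"
    and "4 \<le> v div 2"
  shows "(\<exists>H. ham_path v H \<and> path_lengths v H = L124 a b c) \<longleftrightarrow>
         (\<forall>d. d dvd v \<longrightarrow> size (filter_mset (\<lambda>x. d dvd x) (L124 a b c)) \<le> v - d)"
proof
  assume "\<exists>H. ham_path v H \<and> path_lengths v H = L124 a b c"
  then show "\<forall>d. d dvd v \<longrightarrow> size (filter_mset (\<lambda>x. d dvd x) (L124 a b c)) \<le> v - d"
    using size_filter_dvd_path_lengths_le by metis
next
  assume divisor_bound: "\<forall>d. d dvd v \<longrightarrow> size (filter_mset (\<lambda>x. d dvd x) (L124 a b c)) \<le> v - d"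
  have "3 \<le> a + b" if "4 dvd v"
  proof -
    have "size (filter_mset (\<lambda>x. 4 dvd x) (L124 a b c)) \<le> v - 4" using divisor_bound that by blast
    then have "c \<le> v - 4" by (simp add: L124_def filter_mset_replicate_mset)
    then show ?thesis using assms(3,4) by linarith
  qed
  moreover have "8 \<le> v" using assms(5) by linarith
  ultimately show "\<exists>H. ham_path v H \<and> path_lengths v H = L124 a b c"
    using ham_path_L124[OF assms(1,2,4)] by metis
qed

end
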